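(* Let $L$ be a sublattice of $A_n$ of rank $n$ and $D\in\mathbb Z^{n+1}$. (i) $r(D)=-1$ if and only if $-D\in\Sigma(L)$. (ii) $r(D)=\min\{\|p+D\|_{\ell_1}: p\in\Sigma(L)\}-1$, where $\|x\|_{\ell_1}=\sum_i|x_i|$.
   Context: Let $n\ge 1$, $H_0=\{x\in\mathbb R^{n+1}:\sum_i x_i=0\}$ and $A_n=H_0\cap\mathbb Z^{n+1}$. For $x\in\mathbb R^{n+1}$, $\deg(x)=\sum_i x_i$. Write $x\le y$ iff $x_i\le y_i$ for all $i$. For a sublattice $L\subseteq A_n$ of rank $n$ and $D\in\mathbb Z^{n+1}$: $|D|=\{E\in\mathbb Z^{n+1}:E\ge 0,\ D-E\in L\}$; $r(D)=-1$ if $|D|=\emptyset$, and otherwise $r(D)=\min\{\deg(E):E\in\mathbb Z^{n+1},E\ge0,|D-E|=\emptyset\}-1$. The Sigma-Region is $\Sigma(L)=\{D\in\mathbb Z^{n+1}: D\not\le p \text{ for all } p\in L\}$. *)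

theory Defs
  imports "HOL-Analysis.Analysis"
begin

text \<open>Vectors of Z^(n+1) are modelled as int^'n with CARD('n) = n+1.\<close>

definition vdeg :: "int^'n \<Rightarrow> int" where
  "vdeg x = (\<Sum>i\<in>UNIV. x $ i)"

definition vle :: "int^'n \<Rightarrow> int^'n \<Rightarrow> bool" where
  "vle x y \<longleftrightarrow> (\<forall>i. x $ i \<le> y $ i)"

definition A_lat :: "(int^'n) set" where
  "A_lat = {x. vdeg x = 0}"

definition is_sublattice :: "(int^'n) set \<Rightarrow> bool" where
  "is_sublattice L \<longleftrightarrow> 0 \<in> L \<and> (\<forall>x\<in>L. \<forall>y\<in>L. x + y \<in> L \<and> x - y \<in> L)"

definition to_real_vec :: "int^'n \<Rightarrow> real^'n" where
  "to_real_vec x = (\<chi> i. real_of_int (x $ i))"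

definition lattice_rank :: "(int^'n) set \<Rightarrow> nat" where
  "lattice_rank L = dim (span (to_real_vec ` L))"

definition linsys :: "(int^'n) set \<Rightarrow> int^'n \<Rightarrow> (int^'n) set" where
  "linsys L D = {E. vle 0 E \<and> D - E \<in> L}"

definition rk :: "(int^'n) set \<Rightarrow> int^'n \<Rightarrow> int" where
  "rk L D = (if linsys L D = {} then -1
             else Inf {vdeg E | E. vle 0 E \<and> linsys L (D - E) = {}} - 1)"

definition Sigma_region :: "(int^'n) set \<Rightarrow> (int^'n) set" where
  "Sigma_region L = {D. \<forall>p\<in>L. \<not> vle D p}"

definition l1norm :: "int^'n \<Rightarrow> int" where
  "l1norm x = (\<Sum>i\<in>UNIV. \<bar>x $ i\<bar>)"

end

theory Submission
  imports Defs
begin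

(* Part (i) is a statement about the linear system |D| alone:
   |D| is empty iff no lattice point q satisfies -D \<le> q, i.e. iff -D lies in the
   Sigma-region; this only uses that L is closed under negation.
   For part (ii) we compare the set of degrees deg E of effective E with |D - E|
   empty (whose infimum defines r(D)+1) with the set of l1-distances |p + D|_1,
   p \<in> Sigma(L).  By (i), E \<mapsto> E - D maps the first set into the second without
   changing the value (E \<ge> 0, so |E|_1 = deg E); conversely, clipping p + D at 0
   gives an effective E with deg E \<le> |p + D|_1 and E - D \<in> Sigma(L), because the
   Sigma-region is closed upwards.  Hence both infima agree.  Finally the
   l1-infimum is 0 iff -D \<in> Sigma(L) and at least 1 otherwise, which matches the
   two branches of the definition of r.  The inclusion L \<subseteq> A_n is used only to
   see that vectors of positive degree lie in Sigma(L), so that all sets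
   involved are nonempty. *)

(* Sublattices are closed under negation; this is all of the group structure
   that the argument needs. *)
lemma sublattice_uminus:
  assumes "is_sublattice L" and "q \<in> L"
  shows "- q \<in> L"
proof -
  have "0 - q \<in> L" using assms unfolding is_sublattice_def by blast
  then show ?thesis by simp
qed

lemma l1norm_nonneg: "l1norm x \<ge> 0"
  unfolding l1norm_def by (auto intro: sum_nonneg)

lemma l1norm_ge_1:
  assumes "x \<noteq> 0"
  shows "l1norm x \<ge> 1"
proof -
  obtain i where i: "x $ i \<noteq> 0" using assms by (metis vec_eq_iff zero_index)
  have "\<bar>x $ i\<bar> \<le> l1norm x"
    unfolding l1norm_def by (rule member_le_sum) auto
  with i show ?thesis by linarith
qed

lemma l1norm_eq_vdeg: "vle 0 E \<Longrightarrow> l1norm E = vdeg E"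
  unfolding l1norm_def vdeg_def vle_def by simp

lemma linsys_empty_iff:
  assumes neg: "\<And>q. q \<in> L \<Longrightarrow> - q \<in> L"
  shows "linsys L X = {} \<longleftrightarrow> - X \<in> Sigma_region L"
proof
  assume empty: "linsys L X = {}"
  show "- X \<in> Sigma_region L"
    unfolding Sigma_region_def
  proof (intro CollectI ballI notI)
    fix q assume q: "q \<in> L" and le: "vle (- X) q"
    have "vle 0 (X + q)" unfolding vle_def
    proof
      fix i
      have "- X $ i \<le> q $ i" using le unfolding vle_def by simp
      then show "0 $ i \<le> (X + q) $ i" by simp
    qed
    moreover have "X - (X + q) \<in> L" using neg[OF q] by simp
    ultimately have "X + q \<in> linsys L X" unfolding linsys_def by simp
    with empty show False by simp
  qed
next
  assume sigma: "- X \<in> Sigma_region L"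
  show "linsys L X = {}"
  proof (rule ccontr)
    assume "linsys L X \<noteq> {}"
    then obtain E where E: "vle 0 E" "X - E \<in> L" unfolding linsys_def by auto
    have "- (X - E) \<in> L" using neg[OF E(2)] .
    moreover have "vle (- X) (- (X - E))" using E(1) unfolding vle_def by simp
    ultimately show False using sigma unfolding Sigma_region_def by blast
  qed
qed

lemma Sigma_region_mono:
  assumes "p \<in> Sigma_region L" and "vle p p'"
  shows "p' \<in> Sigma_region L"
  using assms unfolding Sigma_region_def vle_def by (blast intro: order_trans)

(* Every vector of positive degree lies in the Sigma-region of a lattice of
   degree-zero vectors, since it cannot be dominated by a degree-zero vector. *)
lemma positive_degree_in_Sigma_region:
  assumes "L \<subseteq> A_lat" and "vdeg p > 0"
  shows "p \<in> Sigma_region L"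
  unfolding Sigma_region_def
proof (intro CollectI ballI notI)
  fix q assume "q \<in> L" and le: "vle p q"
  then have "vdeg q = 0" using assms(1) unfolding A_lat_def by auto
  moreover have "vdeg p \<le> vdeg q"
    using le unfolding vdeg_def vle_def by (intro sum_mono) auto
  ultimately show False using assms(2) by simp
qed

lemma Sigma_region_nonempty:
  assumes "L \<subseteq> A_lat"
  shows "Sigma_region L \<noteq> {}"
proof -
  have "vdeg (\<chi> i. 1 :: int^'n) > 0" by (simp add: vdeg_def)
  then show ?thesis using positive_degree_in_Sigma_region[OF assms] by blast
qed

lemma cInf_eq_if_dominating:
  fixes A B :: "'a::conditionally_complete_linorder set"
  assumes sub: "A \<subseteq> B" and ne: "B \<noteq> {}" and bdd: "bdd_below B"
    and dom: "\<And>b. b \<in> B \<Longrightarrow> \<exists>a\<in>A. a \<le> b"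
  shows "Inf A = Inf B"
proof -
  have "A \<noteq> {}" using ne dom by blast
  then have "Inf B \<le> Inf A" using bdd sub by (rule cInf_superset_mono)
  moreover have "Inf A \<le> Inf B"
    using ne bdd_below_mono[OF bdd sub] dom by (rule cInf_mono)
  ultimately show ?thesis by (rule antisym[rotated])
qed

lemma Inf_degree_eq_Inf_l1norm:
  fixes D :: "int^'n"
  assumes neg: "\<And>q. q \<in> L \<Longrightarrow> - q \<in> L" and "L \<subseteq> A_lat"
  shows "Inf {vdeg E | E. vle 0 E \<and> linsys L (D - E) = {}}
       = Inf {l1norm (p + D) | p. p \<in> Sigma_region L}"
proof (rule cInf_eq_if_dominating)
  note empty_iff = linsys_empty_iff[OF neg]
  show "{vdeg E | E. vle 0 E \<and> linsys L (D - E) = {}}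
      \<subseteq> {l1norm (p + D) | p. p \<in> Sigma_region L}"
  proof clarify
    fix E assume E: "vle 0 E" "linsys L (D - E) = {}"
    have "E - D \<in> Sigma_region L" using E(2) empty_iff[of "D - E"] by simp
    moreover have "vdeg E = l1norm (E - D + D)" using l1norm_eq_vdeg[OF E(1)] by simp
    ultimately show "\<exists>p. vdeg E = l1norm (p + D) \<and> p \<in> Sigma_region L" by blast
  qed
  show "{l1norm (p + D) | p. p \<in> Sigma_region L} \<noteq> {}"
    using Sigma_region_nonempty[OF assms(2)] by blast
  show "bdd_below {l1norm (p + D) | p. p \<in> Sigma_region L}"
    unfolding bdd_below_def using l1norm_nonneg by blast
  fix b assume "b \<in> {l1norm (p + D) | p. p \<in> Sigma_region L}"
  then obtain p where p: "b = l1norm (p + D)" "p \<in> Sigma_region L" by blast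
  define E :: "int^'n" where "E = (\<chi> i. max (p $ i + D $ i) 0)"
  have E_eff: "vle 0 E" unfolding E_def vle_def by simp
  have "vle p (E - D)" unfolding E_def vle_def by (simp add: max_def)
  then have "E - D \<in> Sigma_region L" using Sigma_region_mono[OF p(2)] by blast
  then have "linsys L (D - E) = {}" using empty_iff[of "D - E"] by simp
  moreover have "vdeg E \<le> b"
    unfolding p(1) vdeg_def l1norm_def E_def by (rule sum_mono) simp
  ultimately show "\<exists>a\<in>{vdeg E | E. vle 0 E \<and> linsys L (D - E) = {}}. a \<le> b"
    using E_eff by blast
qed

lemma Inf_l1norm_in_Sigma:
  assumes "- D \<in> Sigma_region L"
  shows "Inf {l1norm (p + D) | p. p \<in> Sigma_region L} = 0"
proof (rule cInf_eq_minimum)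
  show "0 \<in> {l1norm (p + D) | p. p \<in> Sigma_region L}"
    using assms by (auto simp: l1norm_def intro!: exI[of _ "- D"])
  show "0 \<le> x" if "x \<in> {l1norm (p + D) | p. p \<in> Sigma_region L}" for x
    using that l1norm_nonneg by auto
qed

lemma Inf_l1norm_not_in_Sigma:
  assumes "L \<subseteq> A_lat" and "- D \<notin> Sigma_region L"
  shows "Inf {l1norm (p + D) | p. p \<in> Sigma_region L} \<ge> 1"
proof (rule cInf_greatest)
  show "{l1norm (p + D) | p. p \<in> Sigma_region L} \<noteq> {}"
    using Sigma_region_nonempty[OF assms(1)] by blast
next
  fix x assume "x \<in> {l1norm (p + D) | p. p \<in> Sigma_region L}"
  then obtain p where "x = l1norm (p + D)" "p \<in> Sigma_region L" by blast
  moreover have "p + D \<noteq> 0"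
  proof
    assume "p + D = 0"
    then have "p = - D" by (simp add: eq_neg_iff_add_eq_0)
    with assms(2) \<open>p \<in> Sigma_region L\<close> show False by simp
  qed
  ultimately show "1 \<le> x" using l1norm_ge_1 by simp
qed

theorem lemma2p1:
  fixes L :: "(int^'n) set" and D :: "int^'n"
  assumes "CARD('n) \<ge> 2"
    and "is_sublattice L" and "L \<subseteq> A_lat"
    and "lattice_rank L = CARD('n) - 1"
  shows "(rk L D = -1 \<longleftrightarrow> - D \<in> Sigma_region L)
       \<and> rk L D = Inf {l1norm (p + D) | p. p \<in> Sigma_region L} - 1"
proof -
  have neg: "\<And>q. q \<in> L \<Longrightarrow> - q \<in> L" using sublattice_uminus[OF assms(2)] .
  note empty_iff = linsys_empty_iff[OF neg, of D]
  note Inf_eq = Inf_degree_eq_Inf_l1norm[OF neg assms(3), of D]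
  show ?thesis
  proof (cases "- D \<in> Sigma_region L")
    case True
    then show ?thesis using empty_iff Inf_l1norm_in_Sigma[OF True]
      unfolding rk_def by simp
  next
    case False
    then show ?thesis using empty_iff Inf_eq Inf_l1norm_not_in_Sigma[OF assms(3) False]
      unfolding rk_def by simp
  qed
qed

end
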